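(* In the setting below, for every $\Delta\in\mathcal M_{\le q(\varepsilon)}$, every $a\in(\mathcal K_r(\alpha)\cap\Delta)\setminus X$, and every chain $S$ of $a$ and $\Delta$, it holds that $|S|\le q(\varepsilon)$.
   Context: Let $I=(E,(\mathcal I_1,\mathcal I_2),c,p,\beta)$ be a BI instance: $(E,\mathcal I_1),(E,\mathcal I_2)$ matroids, $c,p:E\to\mathbb R_{\ge0}$, $\beta\ge0$, $\mathcal M=\mathcal I_1\cap\mathcal I_2$, a solution is $S\in\mathcal M$ with $c(S)\le\beta$, and $\mathrm{OPT}(I)$ is the maximum of $p(S)=\sum_{e\in S}p(e)$ over solutions. Fix $0<\varepsilon<\tfrac12$, $\tfrac{\mathrm{OPT}(I)}2\le\alpha\le\mathrm{OPT}(I)$, $r\in\{1,\dots,\lfloor\log_{1-\varepsilon}(\varepsilon/2)+1\rfloor\}$. Let $q(\varepsilon)=\lceil\varepsilon^{-1/\varepsilon}\rceil$, $\mathcal M_{\le q(\varepsilon)}=\{A\in\mathcal M:|A|\le q(\varepsilon)\}$, $\mathcal K_r(\alpha)=\{e\in E:\tfrac{p(e)}{2\alpha}\in((1-\varepsilon)^r,(1-\varepsilon)^{r-1}]\}$, $A+e=A\cup\{e\}$, $A-e=A\setminus\{e\}$. For $S\subseteq\mathcal K_r(\alpha)$ let $U_S=\{e\in\mathcal K_r(\alpha)\setminus S: S+e\in\mathcal I_1\}$, and if $|S|\le q(\varepsilon)$ let $B_S$ be a (fixed) minimum-cost basis w.r.t. $c$ of the matroid on ground set $U_S$ with independent sets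 $\{A\in\mathcal I_2: A\subseteq U_S,|A|\le q(\varepsilon)\}$. Let $\mathcal S$ (the branches) be the smallest family of sets with $\emptyset\in\mathcal S$ and such that $S+e\in\mathcal S$ whenever $S\in\mathcal S$, $|S|\le q(\varepsilon)$ and $e\in B_S$. Let $X=\bigcup_{S\in\mathcal S,\,|S|\le q(\varepsilon)}B_S$. For $\Delta\in\mathcal M_{\le q(\varepsilon)}$, $a\in\Delta\cap\mathcal K_r(\alpha)$, $b\in\mathcal K_r(\alpha)\setminus\Delta$: $b$ is a semi-shift to $a$ for $\Delta$ if $c(b)\le c(a)$, $\Delta-a+b\in\mathcal I_2$ and $\Delta-a+b\notin\mathcal I_1$. For $\Delta\in\mathcal M_{\le q(\varepsilon)}$ and $a\in(\mathcal K_r(\alpha)\cap\Delta)\setminus X$, a set $S\in\mathcal S$ is a chain of $a$ and $\Delta$ if $a\in U_S$ and every $e\in S$ is a semi-shift to $a$ for $\Delta$. *)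

theory Defs
  imports Complex_Main
begin

definition matroid :: "'a set \<Rightarrow> 'a set set \<Rightarrow> bool" where
  "matroid E I \<longleftrightarrow> finite E \<and> {} \<in> I \<and> (\<forall>A\<in>I. A \<subseteq> E)
     \<and> (\<forall>A B. B \<in> I \<and> A \<subseteq> B \<longrightarrow> A \<in> I)
     \<and> (\<forall>A\<in>I. \<forall>B\<in>I. card A < card B \<longrightarrow> (\<exists>e\<in>B - A. insert e A \<in> I))"

definition OPT :: "'a set set \<Rightarrow> 'a set set \<Rightarrow> ('a \<Rightarrow> real) \<Rightarrow> ('a \<Rightarrow> real) \<Rightarrow> real \<Rightarrow> real" where
  "OPT I1 I2 c p \<beta> = Max {sum p S | S. S \<in> I1 \<inter> I2 \<and> sum c S \<le> \<beta>}"

definition qeps :: "real \<Rightarrow> nat" where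
  "qeps \<epsilon> = nat \<lceil>\<epsilon> powr (- 1 / \<epsilon>)\<rceil>"

definition Kr :: "'a set \<Rightarrow> ('a \<Rightarrow> real) \<Rightarrow> real \<Rightarrow> real \<Rightarrow> nat \<Rightarrow> 'a set" where
  "Kr E p \<epsilon> \<alpha> r = {e \<in> E. (1 - \<epsilon>) ^ r < p e / (2 * \<alpha>) \<and> p e / (2 * \<alpha>) \<le> (1 - \<epsilon>) ^ (r - 1)}"

definition US :: "'a set \<Rightarrow> 'a set set \<Rightarrow> 'a set \<Rightarrow> 'a set" where
  "US K I1 S = {e \<in> K - S. insert e S \<in> I1}"

definition trunc_indep :: "'a set set \<Rightarrow> 'a set \<Rightarrow> nat \<Rightarrow> 'a set set" where
  "trunc_indep I2 U q = {A \<in> I2. A \<subseteq> U \<and> card A \<le> q}"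

definition is_basis :: "'a set \<Rightarrow> 'a set set \<Rightarrow> 'a set \<Rightarrow> bool" where
  "is_basis U I B \<longleftrightarrow> B \<in> I \<and> (\<forall>x \<in> U - B. insert x B \<notin> I)"

definition is_min_cost_basis :: "('a \<Rightarrow> real) \<Rightarrow> 'a set \<Rightarrow> 'a set set \<Rightarrow> 'a set \<Rightarrow> bool" where
  "is_min_cost_basis c U I B \<longleftrightarrow> is_basis U I B \<and> (\<forall>B'. is_basis U I B' \<longrightarrow> sum c B \<le> sum c B')"

definition valid_bases :: "'a set \<Rightarrow> 'a set set \<Rightarrow> 'a set set \<Rightarrow> ('a \<Rightarrow> real) \<Rightarrow> nat \<Rightarrow> ('a set \<Rightarrow> 'a set) \<Rightarrow> bool" where
  "valid_bases K I1 I2 c q B \<longleftrightarrow>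
     (\<forall>S. S \<subseteq> K \<and> card S \<le> q \<longrightarrow> is_min_cost_basis c (US K I1 S) (trunc_indep I2 (US K I1 S) q) (B S))"

inductive_set branches :: "('a set \<Rightarrow> 'a set) \<Rightarrow> nat \<Rightarrow> 'a set set" for B q where
  empty: "{} \<in> branches B q"
| step: "S \<in> branches B q \<Longrightarrow> card S \<le> q \<Longrightarrow> e \<in> B S \<Longrightarrow> insert e S \<in> branches B q"

definition Xset :: "('a set \<Rightarrow> 'a set) \<Rightarrow> nat \<Rightarrow> 'a set" where
  "Xset B q = \<Union> (B ` {S \<in> branches B q. card S \<le> q})"

definition semi_shift :: "'a set set \<Rightarrow> 'a set set \<Rightarrow> ('a \<Rightarrow> real) \<Rightarrow> 'a set \<Rightarrow> 'a set \<Rightarrow> 'a \<Rightarrow> 'a \<Rightarrow> bool" where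
  "semi_shift I1 I2 c K \<Delta> a b \<longleftrightarrow> a \<in> \<Delta> \<inter> K \<and> b \<in> K - \<Delta> \<and> c b \<le> c a
     \<and> insert b (\<Delta> - {a}) \<in> I2 \<and> insert b (\<Delta> - {a}) \<notin> I1"

definition is_chain :: "'a set set \<Rightarrow> 'a set set \<Rightarrow> ('a \<Rightarrow> real) \<Rightarrow> 'a set \<Rightarrow> ('a set \<Rightarrow> 'a set) \<Rightarrow> nat
     \<Rightarrow> 'a set \<Rightarrow> 'a \<Rightarrow> 'a set \<Rightarrow> bool" where
  "is_chain I1 I2 c K B q \<Delta> a S \<longleftrightarrow> S \<in> branches B q \<and> a \<in> US K I1 S
     \<and> (\<forall>e\<in>S. semi_shift I1 I2 c K \<Delta> a e)"

end

theory Submission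
  imports Defs
begin

text \<open>A chain S is independent in the first matroid (it extends by a), while no element of S
  can be exchanged for a in \<Delta> within that matroid. By the augmentation axiom, S cannot be larger
  than \<Delta> - {a}, so |S| \<le> |\<Delta>| \<le> q(\<epsilon>).\<close>

lemma matroid_card_le_if_no_augmentation:
  assumes "matroid E I" and "A \<in> I" and "B \<in> I"
    and "\<And>e. e \<in> B - A \<Longrightarrow> insert e A \<notin> I"
  shows "card B \<le> card A"
proof (rule ccontr)
  assume "\<not> card B \<le> card A"
  then have "card A < card B"
    by simp
  moreover have "\<forall>A\<in>I. \<forall>B\<in>I. card A < card B \<longrightarrow> (\<exists>e\<in>B - A. insert e A \<in> I)"
    using assms(1) unfolding matroid_def by blast
  ultimately obtain e where "e \<in> B - A" and "insert e A \<in> I"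
    using assms(2,3) by blast
  then show False
    using assms(4) by blast
qed

lemma matroid_indep_subset:
  assumes "matroid E I" and "B \<in> I" and "A \<subseteq> B"
  shows "A \<in> I"
proof -
  have "\<forall>A B. B \<in> I \<and> A \<subseteq> B \<longrightarrow> A \<in> I"
    using assms(1) unfolding matroid_def by blast
  then show ?thesis
    using assms(2,3) by blast
qed

lemma chain_indep:
  assumes "matroid E I1" and "is_chain I1 I2 c K B q \<Delta> a S"
  shows "S \<in> I1"
proof -
  have "insert a S \<in> I1"
    using assms(2) unfolding is_chain_def US_def by blast
  then show ?thesis
    by (rule matroid_indep_subset[OF assms(1)]) blast
qed

lemma chain_card_le_card_Diff:
  assumes "matroid E I1" and "\<Delta> \<in> I1" and "is_chain I1 I2 c K B q \<Delta> a S"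
  shows "card S \<le> card (\<Delta> - {a})"
proof (rule matroid_card_le_if_no_augmentation[OF assms(1)])
  show "\<Delta> - {a} \<in> I1"
    by (rule matroid_indep_subset[OF assms(1,2)]) blast
  show "S \<in> I1"
    using chain_indep[OF assms(1,3)] .
  show "insert e (\<Delta> - {a}) \<notin> I1" if "e \<in> S - (\<Delta> - {a})" for e
  proof -
    have "semi_shift I1 I2 c K \<Delta> a e"
      using assms(3) that unfolding is_chain_def by blast
    then show ?thesis
      unfolding semi_shift_def by blast
  qed
qed

theorem mainTheorem13:
  fixes E :: "'a set" and I1 I2 :: "'a set set" and c p :: "'a \<Rightarrow> real"
    and \<beta> \<epsilon> \<alpha> :: real and r :: nat and B :: "'a set \<Rightarrow> 'a set"
    and \<Delta> S :: "'a set" and a :: 'a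
  assumes "matroid E I1" and "matroid E I2"
    and "\<forall>e\<in>E. c e \<ge> 0" and "\<forall>e\<in>E. p e \<ge> 0" and "\<beta> \<ge> 0"
    and "0 < \<epsilon>" and "\<epsilon> < 1/2"
    and "OPT I1 I2 c p \<beta> / 2 \<le> \<alpha>" and "\<alpha> \<le> OPT I1 I2 c p \<beta>"
    and "1 \<le> r" and "int r \<le> \<lfloor>log (1 - \<epsilon>) (\<epsilon> / 2) + 1\<rfloor>"
    and "valid_bases (Kr E p \<epsilon> \<alpha> r) I1 I2 c (qeps \<epsilon>) B"
    and "\<Delta> \<in> I1 \<inter> I2" and "card \<Delta> \<le> qeps \<epsilon>"
    and "a \<in> (Kr E p \<epsilon> \<alpha> r \<inter> \<Delta>) - Xset B (qeps \<epsilon>)"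
    and "is_chain I1 I2 c (Kr E p \<epsilon> \<alpha> r) B (qeps \<epsilon>) \<Delta> a S"
  shows "card S \<le> qeps \<epsilon>"
proof -
  have "\<Delta> \<in> I1"
    using assms(13) by blast
  then have "card S \<le> card (\<Delta> - {a})"
    using assms(1,16) chain_card_le_card_Diff by metis
  also have "\<dots> \<le> card \<Delta>"
    by (rule card_Diff1_le)
  also have "\<dots> \<le> qeps \<epsilon>"
    by fact
  finally show ?thesis .
qed

end
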